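(* For every pair of positive integers $g,k$, every graph $G_{g,k}$ obtained by the construction described in the context has girth at least $g$.
   Context: Hypergraph notions. A closed walk of length $\ell$ in a hypergraph $H$ is a sequence $v_0F_0v_1F_1\ldots F_{\ell-1}v_0$ with $v_i,v_{i+1}\in F_i$ for all $0\le i<\ell$ (indices mod $\ell$), $F_i\ne F_{i+1}$ for all $i$ (indices mod $\ell$), and $v_1,\ldots,v_{\ell-1}$ pairwise distinct. An $r$-uniform hypergraph $H$ is tranquil, witnessed by labellings $\lambda=\{\lambda_F\}_{F\in E(H)}$ with $\lambda_F:F\to\{1,\dots,r\}$, if for every closed walk $W=v_0F_0\ldots F_{\ell-1}v_0$ the multigraph on $\{1,\dots,r\}$ with edge multiset $\{\lambda_{F_i}(v_i)\lambda_{F_i}(v_{i+1}):0\le i<\ell\}$ is bridgeless. The chromatic number of a hypergraph is the least number of colours in a vertex colouring with no monochromatic hyperedge; its girth is the length of a shortest Berge cycle (distinct hyperedges $F_1,\dots,F_\ell$ and distinct vertices $x_1,\dots,x_\ell$ with $x_i\in F_i\cap F_{i+1}$, indices mod $\ell$). Construction. Fix a positive integer $g$. $G_{g,1}$ is a single vertex. For $k\ge 2$, given a graph $G_{g,k-1}$ obtained by the construction, with vertex set identified with $\{1,\dots,r\}$, take a finite tranquil $r$-uniform hypergraph $H$ with chromatic number at least $k$ and girth at least $\lceil g/3\rceil$, together with tranquility-witnessing labellings $\lambda_F$, each $\lambda_F:F\to\{1,\dots,r\}$ a bijection. The graph $G_{g,k}$ consists of an independent set $T$ with a bijection $\nu:T\to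 V(H)$, together with, for each hyperedge $F\in E(H)$, a disjoint copy $G_F$ of $G_{g,k-1}$; for each $F\in E(H)$ one adds the perfect matching between $G_F$ and $\nu^{-1}(F)$ joining the vertex of $G_F$ corresponding to $i\in\{1,\dots,r\}$ to the vertex $t\in\nu^{-1}(F)$ with $\lambda_F(\nu(t))=i$. No other edges are present. The girth of a graph is the length of its shortest cycle (infinite if acyclic). *)

theory Defs
  imports Complex_Main "HOL-Library.Extended_Nat"
begin

definition graph_cycle :: "nat set \<Rightarrow> nat set set \<Rightarrow> nat list \<Rightarrow> bool" where
  "graph_cycle V E xs \<longleftrightarrow> length xs \<ge> 3 \<and> distinct xs \<and> set xs \<subseteq> V \<and>
     (\<forall>i < length xs. {xs ! i, xs ! (Suc i mod length xs)} \<in> E)"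

text \<open>Girth: length of a shortest cycle; infinite (Inf of the empty set) if acyclic.\<close>
definition graph_girth :: "nat set \<Rightarrow> nat set set \<Rightarrow> enat" where
  "graph_girth V E = (INF xs \<in> {xs. graph_cycle V E xs}. enat (length xs))"

text \<open>Closed walk v_0 F_0 v_1 ... F_(l-1) v_0, given by functions v, F on indices 0..l-1 (mod l).\<close>
definition hyp_closed_walk :: "nat set set \<Rightarrow> nat \<Rightarrow> (nat \<Rightarrow> nat) \<Rightarrow> (nat \<Rightarrow> nat set) \<Rightarrow> bool" where
  "hyp_closed_walk EH l v F \<longleftrightarrow> l \<ge> 1 \<and>
     (\<forall>i < l. F i \<in> EH \<and> v i \<in> F i \<and> v (Suc i mod l) \<in> F i \<and> F i \<noteq> F (Suc i mod l)) \<and>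
     inj_on v {1..<l}"

text \<open>The multigraph with edges a_i b_i (i < l) is bridgeless: removing any single non-loop
  edge (one copy) leaves its endpoints connected.\<close>
definition multigraph_bridgeless :: "nat \<Rightarrow> (nat \<Rightarrow> nat) \<Rightarrow> (nat \<Rightarrow> nat) \<Rightarrow> bool" where
  "multigraph_bridgeless l a b \<longleftrightarrow>
     (\<forall>i < l. a i \<noteq> b i \<longrightarrow>
        (\<lambda>x y. \<exists>j < l. j \<noteq> i \<and> ((x = a j \<and> y = b j) \<or> (x = b j \<and> y = a j)))\<^sup>*\<^sup>* (a i) (b i))"

definition tranquil :: "nat set set \<Rightarrow> (nat set \<Rightarrow> nat \<Rightarrow> nat) \<Rightarrow> bool" where
  "tranquil EH lam \<longleftrightarrow>
     (\<forall>l v F. hyp_closed_walk EH l v F \<longrightarrow>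
        multigraph_bridgeless l (\<lambda>i. lam (F i) (v i)) (\<lambda>i. lam (F i) (v (Suc i mod l))))"

definition hyp_chromatic_ge :: "nat set \<Rightarrow> nat set set \<Rightarrow> nat \<Rightarrow> bool" where
  "hyp_chromatic_ge VH EH k \<longleftrightarrow>
     (\<forall>c :: nat \<Rightarrow> nat. (\<forall>x \<in> VH. c x < k - 1) \<longrightarrow> (\<exists>F \<in> EH. \<exists>col. \<forall>x \<in> F. c x = col))"

text \<open>Berge cycle of length l \<ge> 2: distinct hyperedges F_1..F_l, distinct vertices x_1..x_l,
  x_i in F_i and F_(i+1) (indices mod l; here 0-based).\<close>
definition berge_cycle :: "nat set set \<Rightarrow> nat \<Rightarrow> (nat \<Rightarrow> nat set) \<Rightarrow> (nat \<Rightarrow> nat) \<Rightarrow> bool" where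
  "berge_cycle EH l F x \<longleftrightarrow> l \<ge> 2 \<and> inj_on F {..<l} \<and> inj_on x {..<l} \<and>
     (\<forall>i < l. F i \<in> EH \<and> x i \<in> F i \<and> x i \<in> F (Suc i mod l))"

definition berge_girth_ge :: "nat set set \<Rightarrow> nat \<Rightarrow> bool" where
  "berge_girth_ge EH m \<longleftrightarrow> (\<forall>l F x. berge_cycle EH l F x \<longrightarrow> l \<ge> m)"

inductive construction :: "nat \<Rightarrow> nat \<Rightarrow> nat set \<Rightarrow> nat set set \<Rightarrow> bool" for g :: nat where
  base: "construction g 1 {v} {}"
| step: "\<lbrakk> construction g k V' E'; k \<ge> 1;
           r = card V'; bij_betw \<phi> V' {1..r};
           finite VH; \<forall>F \<in> EH. F \<subseteq> VH \<and> card F = r;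
           \<forall>F \<in> EH. bij_betw (lam F) F {1..r};
           tranquil EH lam;
           hyp_chromatic_ge VH EH (Suc k);
           berge_girth_ge EH (nat \<lceil>real g / 3\<rceil>);
           bij_betw \<nu> T VH;
           \<forall>F \<in> EH. inj_on (\<psi> F) V';
           \<forall>F \<in> EH. \<psi> F ` V' \<inter> T = {};
           \<forall>F \<in> EH. \<forall>F' \<in> EH. F \<noteq> F' \<longrightarrow> \<psi> F ` V' \<inter> \<psi> F' ` V' = {};
           V = T \<union> (\<Union>F \<in> EH. \<psi> F ` V');
           E = (\<Union>F \<in> EH. (\<lambda>e. \<psi> F ` e) ` E') \<union>
               {{\<psi> F u, t} | F u t. F \<in> EH \<and> u \<in> V' \<and> t \<in> T \<and> \<nu> t \<in> F \<and> lam F (\<nu> t) = \<phi> u} \<rbrakk>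
         \<Longrightarrow> construction g (Suc k) V E"

end

theory Submission
  imports Defs
begin

text \<open>Copies of \<open>G\<^sub>g\<^sub>,\<^sub>k\<^sub>-\<^sub>1\<close> are joined only through the independent
  set \<open>T\<close>, so a cycle avoiding \<open>T\<close> lies in one copy and has length at least \<open>g\<close> by induction.
  A cycle meeting \<open>T\<close> splits at its \<open>T\<close>-vertices into segments, each running through a single
  copy \<open>G\<^sub>F\<close>. Every vertex of a copy has exactly one neighbour in \<open>T\<close>, so consecutive
  \<open>T\<close>-vertices of the cycle are at distance at least 3; and a \<open>T\<close>-vertex has exactly one
  neighbour in each copy, so consecutive segments use different hyperedges. The hyperedges of
  the segments, linked by the distinct vertices \<open>\<nu>(t)\<close> of the \<open>T\<close>-vertices \<open>t\<close>, form a closed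
  walk in \<open>H\<close>, which contains a Berge cycle of length at most the number \<open>m\<close> of segments.
  Hence the cycle has length at least \<open>3m \<ge> 3\<lceil>g/3\<rceil> \<ge> g\<close>.\<close>

lemma mod_neq_if_less_less_add:
  fixes a b n :: nat
  assumes "a < b" and "b < a + n"
  shows "a mod n \<noteq> b mod n"
proof
  assume "a mod n = b mod n"
  then have "n dvd b - a" using mod_eq_dvd_iff_nat[of a b n] \<open>a < b\<close> by simp
  then show False using assms by (auto dest: dvd_imp_le)
qed

lemma le_three_times_ceiling_third: "g \<le> 3 * nat \<lceil>real g / 3\<rceil>"
proof -
  have "real g / 3 \<le> of_int \<lceil>real g / 3\<rceil>" by (rule le_of_int_ceiling)
  then show ?thesis by linarith
qed

lemma berge_cycle_in_closed_walk:
  assumes "0 < m" and closed: "F m = F 0" and inj_x: "inj_on x {..<m}"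
    and step: "\<And>j. j < m \<Longrightarrow> F j \<in> EH \<and> x j \<in> F j \<and> x j \<in> F (Suc j) \<and> F j \<noteq> F (Suc j)"
  shows "\<exists>L\<le>m. \<exists>F' x'. berge_cycle EH L F' x'"
proof -
  \<comment> \<open>A shortest repetition \<open>F i = F (i + d)\<close> leaves \<open>F i, \<dots>, F (i + d - 1)\<close> distinct.\<close>
  define repeats where "repeats d \<longleftrightarrow> (\<exists>i. i + d \<le> m \<and> 0 < d \<and> F i = F (i + d))" for d
  have "repeats m" using \<open>0 < m\<close> closed unfolding repeats_def by (intro exI[of _ 0]) auto
  define d where "d = (LEAST d. repeats d)"
  have "repeats d" unfolding d_def using \<open>repeats m\<close> by (rule LeastI)
  then obtain i where i: "i + d \<le> m" "0 < d" "F i = F (i + d)" unfolding repeats_def by blast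
  have d_min: "d \<le> d'" if "repeats d'" for d' unfolding d_def using that by (rule Least_le)
  have no_repeat: "F (i + a) \<noteq> F (i + b)" if "a < b" "b < d" for a b
  proof
    assume "F (i + a) = F (i + b)"
    then have "repeats (b - a)" unfolding repeats_def using that i by (intro exI[of _ "i + a"]) auto
    then show False using d_min that by fastforce
  qed
  have "d \<noteq> 1"
  proof
    assume "d = 1"
    then have "i < m" "F i = F (Suc i)" using i by simp_all
    then show False using step by blast
  qed
  define F' x' where "F' s = F (i + s)" and "x' s = x (i + s)" for s
  have "berge_cycle EH d F' x'"
    unfolding berge_cycle_def
  proof (intro conjI allI impI)
    show "2 \<le> d" using \<open>d \<noteq> 1\<close> i by linarith
    show "inj_on F' {..<d}" unfolding F'_def by (intro linorder_inj_onI') (simp add: no_repeat)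
    show "inj_on x' {..<d}" unfolding x'_def using inj_x i
      by (intro linorder_inj_onI') (auto simp: inj_on_eq_iff)
    fix s assume "s < d"
    then have "i + s < m" using i by linarith
    then have "F (i + s) \<in> EH" "x (i + s) \<in> F (i + s)" "x (i + s) \<in> F (i + Suc s)"
      using step by simp_all
    moreover have "F' (Suc s mod d) = F (i + Suc s)"
      using \<open>s < d\<close> i(3) unfolding F'_def by (cases "Suc s = d") simp_all
    ultimately show "F' s \<in> EH" "x' s \<in> F' s" "x' s \<in> F' (Suc s mod d)"
      unfolding F'_def x'_def by simp_all
  qed
  then show ?thesis using d_min[OF \<open>repeats m\<close>] by blast
qed

locale construction_step =
  fixes V' :: "nat set" and E' :: "nat set set" and \<phi> :: "nat \<Rightarrow> nat"
    and EH :: "nat set set" and lam :: "nat set \<Rightarrow> nat \<Rightarrow> nat" and \<nu> :: "nat \<Rightarrow> nat"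
    and T :: "nat set" and \<psi> :: "nat set \<Rightarrow> nat \<Rightarrow> nat" and V :: "nat set" and E :: "nat set set"
  assumes inj_phi: "inj_on \<phi> V'"
    and inj_lam: "\<And>F. F \<in> EH \<Longrightarrow> inj_on (lam F) F"
    and inj_nu: "inj_on \<nu> T"
    and inj_psi: "\<And>F. F \<in> EH \<Longrightarrow> inj_on (\<psi> F) V'"
    and copy_disjoint_T: "\<And>F. F \<in> EH \<Longrightarrow> \<psi> F ` V' \<inter> T = {}"
    and copies_disjoint:
      "\<And>F F'. F \<in> EH \<Longrightarrow> F' \<in> EH \<Longrightarrow> F \<noteq> F' \<Longrightarrow> \<psi> F ` V' \<inter> \<psi> F' ` V' = {}"
    and vertices: "V = T \<union> (\<Union>F \<in> EH. \<psi> F ` V')"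
    and edges: "E = (\<Union>F \<in> EH. (\<lambda>e. \<psi> F ` e) ` E') \<union>
      {{\<psi> F u, t} | F u t. F \<in> EH \<and> u \<in> V' \<and> t \<in> T \<and> \<nu> t \<in> F \<and> lam F (\<nu> t) = \<phi> u}"
    and edges'_subset: "\<And>e. e \<in> E' \<Longrightarrow> e \<subseteq> V'"
begin

abbreviation copy :: "nat set \<Rightarrow> nat set" where
  "copy F \<equiv> \<psi> F ` V'"

lemma copy_unique: "F \<in> EH \<Longrightarrow> F' \<in> EH \<Longrightarrow> v \<in> copy F \<Longrightarrow> v \<in> copy F' \<Longrightarrow> F = F'"
  using copies_disjoint by blast

definition copy_of :: "nat \<Rightarrow> nat set" where
  "copy_of v = (SOME F. F \<in> EH \<and> v \<in> copy F)"

lemma copy_of: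
  assumes "v \<in> V" and "v \<notin> T"
  shows "copy_of v \<in> EH" and "v \<in> copy (copy_of v)"
proof -
  have "\<exists>F. F \<in> EH \<and> v \<in> copy F" using assms vertices by blast
  then have "copy_of v \<in> EH \<and> v \<in> copy (copy_of v)" unfolding copy_of_def by (rule someI_ex)
  then show "copy_of v \<in> EH" and "v \<in> copy (copy_of v)" by blast+
qed

lemma edge_cases:
  assumes "e \<in> E"
  obtains (in_copy) F e' where "F \<in> EH" "e' \<in> E'" "e = \<psi> F ` e'"
    | (matching) F u t where "F \<in> EH" "u \<in> V'" "t \<in> T" "\<nu> t \<in> F" "lam F (\<nu> t) = \<phi> u"
        "e = {\<psi> F u, t}"
  using assms unfolding edges by blast

lemma T_edge:
  assumes "{t, v} \<in> E" and "t \<in> T"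
  obtains F u where "F \<in> EH" "u \<in> V'" "v = \<psi> F u" "\<nu> t \<in> F" "lam F (\<nu> t) = \<phi> u"
  using assms(1)
proof (cases rule: edge_cases)
  case (in_copy F e')
  then have "t \<in> copy F" using edges'_subset by blast
  then show thesis using copy_disjoint_T in_copy(1) assms(2) by blast
next
  case (matching F u t')
  have "\<psi> F u \<notin> T" using copy_disjoint_T matching by blast
  then have "t = t'" "v = \<psi> F u" using matching(6) assms(2) by (auto simp: doubleton_eq_iff)
  then show thesis using that matching by blast
qed

lemma T_edge_not_T: "{t, v} \<in> E \<Longrightarrow> t \<in> T \<Longrightarrow> v \<notin> T"
  by (metis T_edge copy_disjoint_T disjoint_iff image_eqI)

lemma T_neighbour_in_copy:
  assumes "{t, v} \<in> E" and "t \<in> T" and "F \<in> EH" and "v \<in> copy F"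
  shows "\<nu> t \<in> F"
proof -
  obtain F' u where "F' \<in> EH" "u \<in> V'" "v = \<psi> F' u" "\<nu> t \<in> F'"
    using T_edge assms(1,2) by metis
  then show ?thesis using copy_unique assms(3,4) by blast
qed

lemma T_neighbour_unique:
  assumes "t1 \<in> T" "t2 \<in> T" "{t1, v} \<in> E" "{t2, v} \<in> E"
  shows "t1 = t2"
proof -
  obtain F1 u1 where 1: "F1 \<in> EH" "u1 \<in> V'" "v = \<psi> F1 u1" "\<nu> t1 \<in> F1" "lam F1 (\<nu> t1) = \<phi> u1"
    using T_edge assms(1,3) by metis
  obtain F2 u2 where 2: "F2 \<in> EH" "u2 \<in> V'" "v = \<psi> F2 u2" "\<nu> t2 \<in> F2" "lam F2 (\<nu> t2) = \<phi> u2"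
    using T_edge assms(2,4) by metis
  have "F1 = F2" using copy_unique 1 2 by blast
  then have "u1 = u2" using inj_psi 1 2 by (metis inj_on_def)
  then have "\<nu> t1 = \<nu> t2" using inj_lam 1 2 \<open>F1 = F2\<close> by (metis inj_on_def)
  then show ?thesis using inj_nu assms(1,2) by (metis inj_on_def)
qed

lemma neighbour_in_copy_unique:
  assumes "t \<in> T" "{t, v1} \<in> E" "{t, v2} \<in> E" "F \<in> EH" "v1 \<in> copy F" "v2 \<in> copy F"
  shows "v1 = v2"
proof -
  obtain F1 u1 where 1: "F1 \<in> EH" "u1 \<in> V'" "v1 = \<psi> F1 u1" "lam F1 (\<nu> t) = \<phi> u1"
    using T_edge assms(1,2) by metis
  obtain F2 u2 where 2: "F2 \<in> EH" "u2 \<in> V'" "v2 = \<psi> F2 u2" "lam F2 (\<nu> t) = \<phi> u2"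
    using T_edge assms(1,3) by metis
  have "F1 = F" using copy_unique[OF 1(1) assms(4) _ assms(5)] 1(2,3) by blast
  moreover have "F2 = F" using copy_unique[OF 2(1) assms(4) _ assms(6)] 2(2,3) by blast
  ultimately have "\<phi> u1 = \<phi> u2" using 1(4) 2(4) by simp
  then have "u1 = u2" using inj_phi 1(2) 2(2) by (simp add: inj_on_eq_iff)
  then show ?thesis using 1(3) 2(3) \<open>F1 = F\<close> \<open>F2 = F\<close> by simp
qed

lemma edge_outside_T_in_copy:
  assumes "{a, b} \<in> E" and "a \<notin> T" and "b \<notin> T"
  obtains F e' where "F \<in> EH" "e' \<in> E'" "{a, b} = \<psi> F ` e'"
  using assms(1)
proof (cases rule: edge_cases)
  case in_copy
  then show thesis by (rule that)
next
  case (matching F u t)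
  then have "t \<in> {a, b}" by (simp only: insert_iff simp_thms)
  then show thesis using matching(3) assms(2,3) by blast
qed

lemma edge_outside_T_same_copy:
  assumes "{a, b} \<in> E" and "a \<notin> T" and "b \<notin> T"
  obtains F where "F \<in> EH" "a \<in> copy F" "b \<in> copy F"
proof (rule edge_outside_T_in_copy[OF assms])
  fix F e' assume "F \<in> EH" "e' \<in> E'" and "{a, b} = \<psi> F ` e'"
  then have "{a, b} \<subseteq> copy F" using edges'_subset by blast
  then show thesis using that \<open>F \<in> EH\<close> by simp
qed

lemma edge_in_copy:
  assumes "{\<psi> F u, \<psi> F u'} \<in> E" and "F \<in> EH" and "u \<in> V'" and "u' \<in> V'"
  shows "{u, u'} \<in> E'"
proof -
  have "\<psi> F u \<notin> T" "\<psi> F u' \<notin> T" using copy_disjoint_T assms(2-4) by blast+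
  then obtain F' e' where F': "F' \<in> EH" "e' \<in> E'" "{\<psi> F u, \<psi> F u'} = \<psi> F' ` e'"
    using edge_outside_T_in_copy assms(1) by metis
  have "e' \<subseteq> V'" using edges'_subset F'(2) .
  then have "F' = F" using copy_unique[OF F'(1) assms(2)] F'(3) assms(3) by blast
  then have "\<psi> F ` e' = \<psi> F ` {u, u'}" using F'(3) by simp
  moreover have "{u, u'} \<subseteq> V'" using assms(3,4) by simp
  ultimately have "e' = {u, u'}"
    using inj_on_image_eq_iff[OF inj_psi[OF assms(2)] \<open>e' \<subseteq> V'\<close>] by blast
  then show ?thesis using F'(2) by simp
qed

lemma cycle_in_copy:
  assumes cycle: "graph_cycle V E (map (\<psi> F) ys)" and "F \<in> EH" and "set ys \<subseteq> V'"
  shows "graph_cycle V' E' ys"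
  unfolding graph_cycle_def
proof (intro conjI allI impI)
  show "3 \<le> length ys" "distinct ys" using cycle unfolding graph_cycle_def by (simp_all add: distinct_map)
  show "set ys \<subseteq> V'" by fact
  fix i assume "i < length ys"
  then have "Suc i mod length ys < length ys" by (intro mod_less_divisor) linarith
  then have "{\<psi> F (ys ! i), \<psi> F (ys ! (Suc i mod length ys))} \<in> E"
    using cycle \<open>i < length ys\<close> unfolding graph_cycle_def by auto
  then show "{ys ! i, ys ! (Suc i mod length ys)} \<in> E'"
    using edge_in_copy \<open>F \<in> EH\<close> \<open>set ys \<subseteq> V'\<close> \<open>i < length ys\<close>
      \<open>Suc i mod length ys < length ys\<close> by (simp add: subsetD)
qed

lemma cycle_avoiding_T_in_copy:
  assumes cycle: "graph_cycle V E xs" and avoid: "set xs \<inter> T = {}"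
  obtains F where "F \<in> EH" "set xs \<subseteq> copy F"
proof -
  have not_T: "xs ! i \<notin> T" if "i < length xs" for i
    using avoid nth_mem[OF that] by blast
  have "0 < length xs" using cycle unfolding graph_cycle_def by linarith
  then have x0: "xs ! 0 \<in> V" "xs ! 0 \<notin> T"
    using cycle not_T nth_mem unfolding graph_cycle_def by auto
  define F where "F = copy_of (xs ! 0)"
  have "F \<in> EH" unfolding F_def using copy_of x0 by blast
  have "xs ! i \<in> copy F" if "i < length xs" for i
    using that
  proof (induction i)
    case 0
    then show ?case unfolding F_def using copy_of x0 by blast
  next
    case (Suc i)
    have "{xs ! i, xs ! (Suc i mod length xs)} \<in> E"
      using cycle Suc_lessD[OF Suc.prems] unfolding graph_cycle_def by blast
    then have "{xs ! i, xs ! Suc i} \<in> E" using Suc.prems by simp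
    moreover have "xs ! i \<notin> T" "xs ! Suc i \<notin> T" using not_T Suc.prems by simp_all
    ultimately obtain F' where F': "F' \<in> EH" "xs ! i \<in> copy F'" "xs ! Suc i \<in> copy F'"
      using edge_outside_T_same_copy by metis
    have "F' = F" using copy_unique[OF F'(1) \<open>F \<in> EH\<close> F'(2)] Suc by simp
    then show ?case using F'(3) by simp
  qed
  then have "set xs \<subseteq> copy F" by (auto simp: in_set_conv_nth)
  then show thesis using that \<open>F \<in> EH\<close> by blast
qed

end

locale cycle_through_T = construction_step +
  fixes xs :: "nat list" and p0 :: nat
  assumes cycle: "graph_cycle V E xs"
    and p0_less: "p0 < length xs" and p0_in_T: "xs ! p0 \<in> T"
begin

definition walk :: "nat \<Rightarrow> nat" where
  "walk a = xs ! (a mod length xs)"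

lemma length_ge_3: "3 \<le> length xs"
  using cycle unfolding graph_cycle_def by simp

lemma mod_length_less: "a mod length xs < length xs"
  using length_ge_3 by (intro mod_less_divisor) linarith

lemma walk_p0: "walk p0 \<in> T"
  using p0_less p0_in_T unfolding walk_def by simp

lemma walk_in_V: "walk a \<in> V"
  using cycle mod_length_less unfolding graph_cycle_def walk_def by (meson nth_mem subsetD)

lemma walk_edge: "{walk a, walk (Suc a)} \<in> E"
proof -
  have "{xs ! (a mod length xs), xs ! (Suc (a mod length xs) mod length xs)} \<in> E"
    using cycle mod_length_less unfolding graph_cycle_def by blast
  then show ?thesis unfolding walk_def by (simp add: mod_Suc_eq)
qed

lemma walk_edge': "{walk (Suc a), walk a} \<in> E"
  using walk_edge by (simp add: insert_commute)

lemma walk_eq_iff: "walk a = walk b \<longleftrightarrow> a mod length xs = b mod length xs"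
  using cycle mod_length_less unfolding graph_cycle_def walk_def by (simp add: nth_eq_iff_index_eq)

lemma walk_add_period: "walk (a + length xs * k) = walk a"
  unfolding walk_def by simp

lemma walk_in_copy:
  assumes "walk a \<notin> T"
  shows "copy_of (walk a) \<in> EH" and "walk a \<in> copy (copy_of (walk a))"
  using copy_of walk_in_V assms by blast+

lemma walk_Suc_not_T: "walk a \<in> T \<Longrightarrow> walk (Suc a) \<notin> T"
  using T_edge_not_T walk_edge by blast

lemma walk_Suc_Suc_not_T: "walk a \<in> T \<Longrightarrow> walk (Suc (Suc a)) \<notin> T"
proof
  assume "walk a \<in> T" and "walk (Suc (Suc a)) \<in> T"
  then have "walk a = walk (Suc (Suc a))"
    using T_neighbour_unique walk_edge walk_edge' by blast
  moreover have "a mod length xs \<noteq> Suc (Suc a) mod length xs"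
    using length_ge_3 by (intro mod_neq_if_less_less_add) simp_all
  ultimately show False using walk_eq_iff by simp
qed

lemma segment_in_one_copy:
  assumes no_T: "\<And>a. p < a \<Longrightarrow> a < q \<Longrightarrow> walk a \<notin> T" and "p < a" and "a < q"
  shows "walk a \<in> copy (copy_of (walk (Suc p)))"
proof -
  have "Suc p \<le> a" using \<open>p < a\<close> by simp
  then show ?thesis
  proof (induction a rule: dec_induct)
    case base
    then show ?case using walk_in_copy no_T \<open>p < a\<close> \<open>a < q\<close> by simp
  next
    case (step b)
    have "walk b \<notin> T" "walk (Suc b) \<notin> T" using no_T step.hyps \<open>a < q\<close> by simp_all
    then obtain F where F: "F \<in> EH" "walk b \<in> copy F" "walk (Suc b) \<in> copy F"
      using edge_outside_T_same_copy walk_edge by metis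
    have "copy_of (walk (Suc p)) \<in> EH" using walk_in_copy no_T \<open>p < a\<close> \<open>a < q\<close> by simp
    then have "F = copy_of (walk (Suc p))" using copy_unique F(1,2) step.IH by blast
    then show ?case using F(3) by simp
  qed
qed

definition next_T :: "nat \<Rightarrow> nat" where
  "next_T p = (LEAST a. p < a \<and> walk a \<in> T)"

lemma next_T_exists: "\<exists>a. p < a \<and> walk a \<in> T"
proof (intro exI conjI)
  have "Suc p \<le> length xs * Suc p" using length_ge_3 mult_le_mono1[of 1 "length xs" "Suc p"] by simp
  then show "p < p0 + length xs * Suc p" by linarith
  show "walk (p0 + length xs * Suc p) \<in> T" using walk_p0 by (simp only: walk_add_period)
qed

lemma next_T: "p < next_T p" "walk (next_T p) \<in> T"
  using LeastI_ex[OF next_T_exists[of p]] unfolding next_T_def by auto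

lemma next_T_le: "p < a \<Longrightarrow> walk a \<in> T \<Longrightarrow> next_T p \<le> a"
  unfolding next_T_def by (rule Least_le) simp

lemma not_T_before_next_T: "p < a \<Longrightarrow> a < next_T p \<Longrightarrow> walk a \<notin> T"
  using next_T_le by force

lemma next_T_gap: "walk p \<in> T \<Longrightarrow> p + 3 \<le> next_T p"
proof -
  assume "walk p \<in> T"
  then have "next_T p \<noteq> Suc p" "next_T p \<noteq> Suc (Suc p)"
    using next_T(2) walk_Suc_not_T walk_Suc_Suc_not_T by metis+
  then show ?thesis using next_T(1)[of p] by linarith
qed

text \<open>\<open>T_pos j\<close> is the position of the \<open>j\<close>-th \<open>T\<close>-vertex after \<open>p0\<close> along the cyclic
  \<open>walk\<close>, and \<open>T_count\<close> is the number of \<open>T\<close>-vertices on the cycle.\<close>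

definition T_pos :: "nat \<Rightarrow> nat" where
  "T_pos j = (next_T ^^ j) p0"

lemma T_pos_0: "T_pos 0 = p0"
  unfolding T_pos_def by simp

lemma T_pos_Suc: "T_pos (Suc j) = next_T (T_pos j)"
  unfolding T_pos_def by simp

lemma T_pos_in_T: "walk (T_pos j) \<in> T"
  by (induction j) (simp_all add: T_pos_0 walk_p0 T_pos_Suc next_T)

lemma T_pos_gap: "T_pos j + 3 \<le> T_pos (Suc j)"
  using next_T_gap[OF T_pos_in_T] by (simp add: T_pos_Suc)

lemma T_pos_lower_bound: "p0 + 3 * j \<le> T_pos j"
proof (induction j)
  case 0
  then show ?case by (simp add: T_pos_0)
next
  case (Suc j)
  then show ?case using T_pos_gap[of j] by simp
qed

lemma strict_mono_T_pos: "strict_mono T_pos"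
  unfolding strict_mono_Suc_iff
proof
  show "T_pos j < T_pos (Suc j)" for j using T_pos_gap[of j] by linarith
qed

definition T_count :: nat where
  "T_count = (LEAST j. p0 + length xs \<le> T_pos j)"

lemma T_pos_T_count_ge: "p0 + length xs \<le> T_pos T_count"
proof -
  have "p0 + length xs \<le> T_pos (length xs)" using T_pos_lower_bound[of "length xs"] by linarith
  then show ?thesis unfolding T_count_def by (rule LeastI)
qed

lemma T_count_pos: "0 < T_count"
proof (rule gr0I)
  assume "T_count = 0"
  then show False using T_pos_T_count_ge length_ge_3 by (simp add: T_pos_0)
qed

lemma T_pos_T_count: "T_pos T_count = p0 + length xs"
proof -
  obtain j where j: "T_count = Suc j" using T_count_pos gr0_implies_Suc by blast
  then have "\<not> p0 + length xs \<le> T_pos j"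
    using not_less_Least[of j "\<lambda>j. p0 + length xs \<le> T_pos j"] unfolding T_count_def by simp
  moreover have "walk (p0 + length xs) \<in> T" using walk_p0 walk_add_period[of p0 1] by simp
  ultimately have "T_pos T_count \<le> p0 + length xs" unfolding j T_pos_Suc by (intro next_T_le) simp_all
  then show ?thesis using T_pos_T_count_ge by simp
qed

lemma three_T_count_le: "3 * T_count \<le> length xs"
  using T_pos_lower_bound[of T_count] T_pos_T_count by simp

text \<open>The \<open>j\<close>-th segment runs from \<open>T_pos j\<close> to \<open>T_pos (Suc j)\<close> through the copy of
  \<open>segment_edge j\<close>; consecutive segments meet at the vertex \<open>junction j\<close> of \<open>H\<close>.\<close>

definition segment_edge :: "nat \<Rightarrow> nat set" where
  "segment_edge j = copy_of (walk (Suc (T_pos j)))"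

definition junction :: "nat \<Rightarrow> nat" where
  "junction j = \<nu> (walk (T_pos (Suc j)))"

lemma segment_edge_T_count: "segment_edge T_count = segment_edge 0"
  unfolding segment_edge_def T_pos_T_count T_pos_0 using walk_add_period[of "Suc p0" 1] by simp

lemma walk_after_T_pos: "segment_edge j \<in> EH" "walk (Suc (T_pos j)) \<in> copy (segment_edge j)"
  unfolding segment_edge_def using walk_in_copy walk_Suc_not_T[OF T_pos_in_T] by blast+

lemma walk_before_T_pos_Suc: "walk (T_pos (Suc j) - 1) \<in> copy (segment_edge j)"
proof -
  have "\<And>a. T_pos j < a \<Longrightarrow> a < T_pos (Suc j) \<Longrightarrow> walk a \<notin> T"
    unfolding T_pos_Suc by (rule not_T_before_next_T)
  moreover have "T_pos j < T_pos (Suc j) - 1" "T_pos (Suc j) - 1 < T_pos (Suc j)"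
    using T_pos_gap[of j] by linarith+
  ultimately show ?thesis unfolding segment_edge_def by (rule segment_in_one_copy)
qed

lemma walk_edge_before_T_pos_Suc: "{walk (T_pos (Suc j)), walk (T_pos (Suc j) - 1)} \<in> E"
proof -
  have "Suc (T_pos (Suc j) - 1) = T_pos (Suc j)" using T_pos_gap[of j] by linarith
  then show ?thesis using walk_edge'[of "T_pos (Suc j) - 1"] by simp
qed

lemma junction_in_segment_edges: "junction j \<in> segment_edge j" "junction j \<in> segment_edge (Suc j)"
  unfolding junction_def
  using T_neighbour_in_copy[OF walk_edge_before_T_pos_Suc T_pos_in_T walk_after_T_pos(1)
      walk_before_T_pos_Suc]
    T_neighbour_in_copy[OF walk_edge[of "T_pos (Suc j)"] T_pos_in_T walk_after_T_pos]
  by simp_all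

text \<open>Otherwise the \<open>T\<close>-vertex at \<open>T_pos (Suc j)\<close> would have its two distinct neighbours on
  the cycle in the same copy.\<close>

lemma segment_edge_Suc_neq: "segment_edge j \<noteq> segment_edge (Suc j)"
proof
  assume same: "segment_edge j = segment_edge (Suc j)"
  let ?q = "T_pos (Suc j)"
  have "walk (?q - 1) = walk (Suc ?q)"
    using neighbour_in_copy_unique[OF T_pos_in_T walk_edge_before_T_pos_Suc walk_edge
        walk_after_T_pos(1) walk_before_T_pos_Suc] walk_after_T_pos(2)[of "Suc j"] same
    by simp
  moreover have "(?q - 1) mod length xs \<noteq> Suc ?q mod length xs"
    using T_pos_gap[of j] length_ge_3 by (intro mod_neq_if_less_less_add) linarith+
  ultimately show False using walk_eq_iff by simp
qed

lemma T_pos_Suc_bounds: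
  assumes "j < T_count"
  shows "p0 < T_pos (Suc j)" and "T_pos (Suc j) \<le> p0 + length xs"
proof -
  show "p0 < T_pos (Suc j)" using strict_monoD[OF strict_mono_T_pos, of 0 "Suc j"] T_pos_0 by simp
  show "T_pos (Suc j) \<le> p0 + length xs"
    using strict_mono_less_eq[OF strict_mono_T_pos, of "Suc j" T_count] assms T_pos_T_count by simp
qed

lemma inj_junction: "inj_on junction {..<T_count}"
proof (rule linorder_inj_onI')
  fix i j assume "i \<in> {..<T_count}" "j \<in> {..<T_count}" "i < j"
  then have "T_pos (Suc i) < T_pos (Suc j)" "T_pos (Suc j) < T_pos (Suc i) + length xs"
    using strict_mono_less[OF strict_mono_T_pos] T_pos_Suc_bounds[of i] T_pos_Suc_bounds[of j]
    by fastforce+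
  then have "walk (T_pos (Suc i)) \<noteq> walk (T_pos (Suc j))"
    using walk_eq_iff mod_neq_if_less_less_add by simp
  then show "junction i \<noteq> junction j"
    unfolding junction_def using inj_nu T_pos_in_T by (simp add: inj_on_eq_iff)
qed

lemma short_berge_cycle: "\<exists>L F x. berge_cycle EH L F x \<and> 3 * L \<le> length xs"
proof -
  have "segment_edge j \<in> EH \<and> junction j \<in> segment_edge j \<and> junction j \<in> segment_edge (Suc j)
      \<and> segment_edge j \<noteq> segment_edge (Suc j)" for j
    using walk_after_T_pos(1) junction_in_segment_edges segment_edge_Suc_neq by simp
  then have "\<exists>L\<le>T_count. \<exists>F x. berge_cycle EH L F x"
    by (rule berge_cycle_in_closed_walk[OF T_count_pos segment_edge_T_count inj_junction])
  then obtain L F x where "L \<le> T_count" "berge_cycle EH L F x" by blast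
  moreover have "3 * L \<le> length xs" using \<open>L \<le> T_count\<close> three_T_count_le by linarith
  ultimately show ?thesis by blast
qed

end

lemma construction_edges_subset: "construction g k V E \<Longrightarrow> e \<in> E \<Longrightarrow> e \<subseteq> V"
proof (induction arbitrary: e rule: construction.induct)
  case (base v)
  then show ?case by simp
next
  case (step k V' E' r \<phi> VH EH lam \<nu> T \<psi> V E)
  from \<open>e \<in> E\<close> consider
      F e' where "F \<in> EH" "e' \<in> E'" "e = \<psi> F ` e'"
    | F u t where "F \<in> EH" "u \<in> V'" "t \<in> T" "e = {\<psi> F u, t}"
    unfolding \<open>E = _\<close> by blast
  then show ?case
  proof cases
    case 1
    then show ?thesis using step.IH \<open>V = _\<close> by blast
  next
    case 2
    then show ?thesis using \<open>V = _\<close> by blast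
  qed
qed

lemma construction_cycle_length:
  assumes "construction g k V E" and "graph_cycle V E xs"
  shows "g \<le> length xs"
  using assms
proof (induction arbitrary: xs rule: construction.induct)
  case (base v)
  then show ?case unfolding graph_cycle_def by (auto dest: spec[of _ 0])
next
  case (step k V' E' r \<phi> VH EH lam \<nu> T \<psi> V E)
  interpret construction_step V' E' \<phi> EH lam \<nu> T \<psi> V E
    using step.hyps construction_edges_subset[OF step.hyps(1)]
    by unfold_locales (auto dest: bij_betw_imp_inj_on)
  show ?case
  proof (cases "set xs \<inter> T = {}")
    case True
    then obtain F where "F \<in> EH" "set xs \<subseteq> copy F"
      using cycle_avoiding_T_in_copy step.prems by blast
    then have "xs \<in> lists (\<psi> F ` V')" by blast
    then have "xs \<in> map (\<psi> F) ` lists V'" by (simp only: lists_image)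
    then obtain ys where "xs = map (\<psi> F) ys" "set ys \<subseteq> V'" by (auto simp: lists_eq_set)
    then have "graph_cycle V' E' ys" using cycle_in_copy step.prems \<open>F \<in> EH\<close> by blast
    then show ?thesis using step.IH \<open>xs = map (\<psi> F) ys\<close> by simp
  next
    case False
    then obtain p0 where "p0 < length xs" "xs ! p0 \<in> T" by (auto simp: in_set_conv_nth)
    then interpret cycle_through_T V' E' \<phi> EH lam \<nu> T \<psi> V E xs p0
      using step.prems by unfold_locales
    obtain L F x where "berge_cycle EH L F x" "3 * L \<le> length xs"
      using short_berge_cycle by blast
    moreover have "nat \<lceil>real g / 3\<rceil> \<le> L"
      using \<open>berge_girth_ge EH (nat \<lceil>real g / 3\<rceil>)\<close> \<open>berge_cycle EH L F x\<close>
      unfolding berge_girth_ge_def by blast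
    ultimately show ?thesis using le_three_times_ceiling_third[of g] by linarith
  qed
qed

theorem lemma4p2:
  fixes g k :: nat and V :: "nat set" and E :: "nat set set"
  assumes "g > 0" and "k > 0" and "construction g k V E"
  shows "enat g \<le> graph_girth V E"
  unfolding graph_girth_def
  using construction_cycle_length[OF assms(3)] by (auto intro!: INF_greatest)

end
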